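(* Let $\lambda>0$, $\Sigma\in\mathbb{R}^{d\times d}$ symmetric positive definite, and $\mathcal{R}_{\mathrm{soft},\infty}(\mu)=\operatorname{tr}(\Sigma)-2\lambda\mu^\top\Sigma^2\mu+\lambda^2(\mu^\top\Sigma\mu)(\mu^\top\Sigma^2\mu)$. The function $\mathcal{R}_{\mathrm{soft},\infty}$ is coercive, and for any $\mu_0\in\mathbb{R}^d$ the solution $\mu_\infty$ of $\dot\mu_\infty=-\nabla\mathcal{R}_{\mathrm{soft},\infty}(\mu_\infty)$, $\mu_\infty(0)=\mu_0$, is bounded: there exists $\rho\ge\|\mu_0\|$ such that \[ \{\mu_\infty(t):t\ge0\}\subset\{\mu\in\mathbb{R}^d:\mathcal{R}_{\mathrm{soft},\infty}(\mu)\le\mathcal{R}_{\mathrm{soft},\infty}(\mu_0)\}\subset B(0,\rho). \]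
   Context: $B(0,\rho)$ is the closed ball of radius $\rho$ centered at $0$. *)

theory Defs
  imports "HOL-Analysis.Analysis"
begin

definition R_soft_inf :: "real \<Rightarrow> real^'d^'d \<Rightarrow> real^'d \<Rightarrow> real" where
  "R_soft_inf lam S mu =
     trace S - 2 * lam * (mu \<bullet> ((S ** S) *v mu))
     + lam^2 * (mu \<bullet> (S *v mu)) * (mu \<bullet> ((S ** S) *v mu))"

end

theory Submission
  imports Defs
begin

text \<open>Positive definiteness gives \<open>x \<bullet> S x \<ge> c |x|\<^sup>2\<close> for some \<open>c > 0\<close>, hence
  \<open>|S x| \<ge> c |x|\<close> by Cauchy-Schwarz. As \<open>\<mu>\<^sup>T S\<^sup>2 \<mu> = |S \<mu>|\<^sup>2\<close>, the risk equals
  \<open>tr S + |S \<mu>|\<^sup>2 (\<lambda>\<^sup>2 \<mu>\<^sup>T S \<mu> - 2 \<lambda>)\<close> and so grows like \<open>|\<mu>|\<^sup>4\<close>; its sublevel sets are bounded.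
  Along the gradient flow the risk has time derivative \<open>-|\<nabla>R|\<^sup>2 \<le> 0\<close>, so the trajectory never
  leaves the initial sublevel set.\<close>

lemma inner_matrix_square_eq_norm:
  fixes S :: "real^'n^'n" and x :: "real^'n"
  assumes "transpose S = S"
  shows "x \<bullet> ((S ** S) *v x) = (norm (S *v x))\<^sup>2"
proof -
  have "x \<bullet> ((S ** S) *v x) = (x v* S) \<bullet> (S *v x)"
    by (simp add: matrix_vector_mul_assoc dot_lmul_matrix)
  also have "x v* S = S *v x"
    by (metis assms transpose_matrix_vector)
  finally show ?thesis
    by (simp add: power2_norm_eq_inner)
qed

lemma posdef_quadratic_form_ge:
  fixes S :: "real^'n^'n"
  assumes posdef: "\<And>x. x \<noteq> 0 \<Longrightarrow> x \<bullet> (S *v x) > 0"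
  obtains c where "c > 0" and "\<And>x. c * (norm x)\<^sup>2 \<le> x \<bullet> (S *v x)"
proof -
  let ?q = "\<lambda>x::real^'n. x \<bullet> (S *v x)"
  have "continuous_on (sphere 0 1) ?q"
    by (intro continuous_intros linear_continuous_on matrix_vector_mul_linear)
  moreover have "sphere (0::real^'n) 1 \<noteq> {}"
    by simp
  ultimately obtain u where u: "u \<in> sphere 0 1" and u_min: "\<And>y. y \<in> sphere 0 1 \<Longrightarrow> ?q u \<le> ?q y"
    using continuous_attains_inf[OF compact_sphere] by blast
  have "?q u * (norm x)\<^sup>2 \<le> ?q x" for x
  proof (cases "x = 0")
    case False
    have "?q u \<le> ?q ((1 / norm x) *\<^sub>R x)"
      using False by (intro u_min) simp
    also have "\<dots> = ?q x / (norm x)\<^sup>2"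
      by (simp add: matrix_vector_mult_scaleR power2_eq_square)
    finally show ?thesis
      using False by (simp add: field_simps)
  qed simp
  moreover have "?q u > 0"
    using u by (intro posdef) auto
  ultimately show thesis
    using that by blast
qed

lemma norm_matrix_vector_ge:
  fixes S :: "real^'n^'n" and x :: "real^'n"
  assumes "c * (norm x)\<^sup>2 \<le> x \<bullet> (S *v x)"
  shows "c * norm x \<le> norm (S *v x)"
proof (cases "x = 0")
  case False
  have "norm x * (c * norm x) \<le> norm x * norm (S *v x)"
    using assms norm_cauchy_schwarz[of x "S *v x"] by (simp add: power2_eq_square mult_ac)
  then show ?thesis
    using False by simp
qed simp

lemma filterlim_scaled_norm_power_at_top:
  fixes k :: real
  assumes "k > 0" and "n > 0"
  shows "filterlim (\<lambda>x::'a::real_normed_vector. k * norm x ^ n) at_top at_infinity"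
  using tendsto_const assms(1) filterlim_pow_at_top[OF assms(2) filterlim_norm_at_top]
  by (rule filterlim_tendsto_pos_mult_at_top)

lemma R_soft_inf_ge_quartic:
  fixes S :: "real^'d^'d" and x :: "real^'d"
  assumes lam: "lam > 0" and sym: "transpose S = S" and c: "c > 0"
    and quad_ge: "\<And>x. c * (norm x)\<^sup>2 \<le> x \<bullet> (S *v x)"
    and large: "4 \<le> lam * c * (norm x)\<^sup>2"
  shows "trace S + lam\<^sup>2 * c ^ 3 / 2 * norm x ^ 4 \<le> R_soft_inf lam S x"
proof -
  have R_eq: "R_soft_inf lam S x
      = trace S + (norm (S *v x))\<^sup>2 * (lam\<^sup>2 * (x \<bullet> (S *v x)) - 2 * lam)"
    unfolding R_soft_inf_def inner_matrix_square_eq_norm[OF sym] by (simp add: algebra_simps)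
  have "c * norm x \<le> norm (S *v x)"
    using norm_matrix_vector_ge quad_ge .
  then have Sx_ge: "c\<^sup>2 * (norm x)\<^sup>2 \<le> (norm (S *v x))\<^sup>2"
    using power_mono[of "c * norm x" _ 2] c by (simp add: power_mult_distrib)
  have "lam\<^sup>2 * (c * (norm x)\<^sup>2) \<le> lam\<^sup>2 * (x \<bullet> (S *v x))"
    using quad_ge by (rule mult_left_mono) simp
  moreover have "4 * lam \<le> lam\<^sup>2 * (c * (norm x)\<^sup>2)"
    using mult_left_mono[OF large, of lam] lam by (simp add: power2_eq_square mult_ac)
  ultimately have factor_ge: "lam\<^sup>2 * (c * (norm x)\<^sup>2) / 2 \<le> lam\<^sup>2 * (x \<bullet> (S *v x)) - 2 * lam"
    by linarith
  have "c\<^sup>2 * (norm x)\<^sup>2 * (lam\<^sup>2 * (c * (norm x)\<^sup>2) / 2)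
      \<le> (norm (S *v x))\<^sup>2 * (lam\<^sup>2 * (x \<bullet> (S *v x)) - 2 * lam)"
    by (rule mult_mono[OF Sx_ge factor_ge]) (use c in simp_all)
  moreover have "c\<^sup>2 * (norm x)\<^sup>2 * (lam\<^sup>2 * (c * (norm x)\<^sup>2) / 2) = lam\<^sup>2 * c ^ 3 / 2 * norm x ^ 4"
    by (simp add: power2_eq_square power3_eq_cube power4_eq_xxxx)
  ultimately show ?thesis
    unfolding R_eq by linarith
qed

lemma R_soft_inf_coercive:
  fixes S :: "real^'d^'d"
  assumes lam: "lam > 0" and sym: "transpose S = S"
    and posdef: "\<And>x. x \<noteq> 0 \<Longrightarrow> x \<bullet> (S *v x) > 0"
  shows "filterlim (R_soft_inf lam S) at_top at_infinity"
proof -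
  obtain c where c: "c > 0" and quad_ge: "\<And>x. c * (norm x)\<^sup>2 \<le> x \<bullet> (S *v x)"
    using posdef_quadratic_form_ge posdef by blast
  have "filterlim (\<lambda>x::real^'d. lam\<^sup>2 * c ^ 3 / 2 * norm x ^ 4) at_top at_infinity"
    using lam c by (intro filterlim_scaled_norm_power_at_top) auto
  then have quartic: "filterlim (\<lambda>x::real^'d. trace S + lam\<^sup>2 * c ^ 3 / 2 * norm x ^ 4)
      at_top at_infinity"
    by (rule filterlim_tendsto_add_at_top[OF tendsto_const])
  have "filterlim (\<lambda>x::real^'d. lam * c * norm x ^ 2) at_top at_infinity"
    using lam c by (intro filterlim_scaled_norm_power_at_top) auto
  then have "eventually (\<lambda>x::real^'d. 4 \<le> lam * c * (norm x)\<^sup>2) at_infinity"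
    by (simp add: filterlim_at_top)
  then have "eventually (\<lambda>x. trace S + lam\<^sup>2 * c ^ 3 / 2 * norm x ^ 4 \<le> R_soft_inf lam S x)
      at_infinity"
    by eventually_elim (rule R_soft_inf_ge_quartic[OF lam sym c quad_ge])
  with quartic show ?thesis
    by (rule filterlim_at_top_mono)
qed

lemma bounded_sublevel_if_coercive:
  fixes f :: "'a::real_normed_vector \<Rightarrow> real"
  assumes "filterlim f at_top at_infinity"
  shows "bounded {x. f x \<le> a}"
proof -
  have "eventually (\<lambda>x. a < f x) at_infinity"
    using assms by (simp add: filterlim_at_top_dense)
  then obtain b where "\<And>x. b \<le> norm x \<Longrightarrow> a < f x"
    by (auto simp: eventually_at_infinity)
  then have "\<forall>x\<in>{x. f x \<le> a}. norm x \<le> b"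
    by (metis linorder_not_le mem_Collect_eq less_imp_le)
  then show ?thesis
    by (auto simp: bounded_iff)
qed

lemma gradient_flow_nonincreasing:
  fixes f :: "'a::real_inner \<Rightarrow> real" and \<mu> :: "real \<Rightarrow> 'a"
  assumes grad: "\<And>x. (f has_derivative (\<lambda>h. G x \<bullet> h)) (at x)"
    and flow: "\<And>t. t \<ge> 0 \<Longrightarrow> (\<mu> has_vector_derivative - G (\<mu> t)) (at t within {0..})"
    and "t \<ge> 0"
  shows "f (\<mu> t) \<le> f (\<mu> 0)"
proof -
  have d_comp: "(f \<circ> \<mu> has_derivative (\<lambda>h. G (\<mu> s) \<bullet> (h *\<^sub>R - G (\<mu> s)))) (at s within {0..t})"
    if "0 \<le> s" "s \<le> t" for s
  proof -
    have d_flow: "(\<mu> has_derivative (\<lambda>h. h *\<^sub>R - G (\<mu> s))) (at s within {0..t})"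
      using flow[OF \<open>0 \<le> s\<close>] unfolding has_vector_derivative_def
      by (rule has_derivative_subset) auto
    have d_f: "(f has_derivative (\<lambda>h. G (\<mu> s) \<bullet> h)) (at (\<mu> s) within \<mu> ` {0..t})"
      using grad by (rule has_derivative_at_withinI)
    show ?thesis
      using diff_chain_within[OF d_flow d_f] by (simp add: o_def)
  qed
  then obtain s where "f (\<mu> t) - f (\<mu> 0) = G (\<mu> s) \<bullet> (t *\<^sub>R - G (\<mu> s))"
    using mvt_very_simple[OF \<open>t \<ge> 0\<close> d_comp] by auto
  also have "\<dots> = - t * (G (\<mu> s) \<bullet> G (\<mu> s))"
    by simp
  also have "\<dots> \<le> 0"
    using \<open>t \<ge> 0\<close> by simp
  finally show ?thesis
    by simp
qed

theorem lemma1: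
  fixes lam :: real and S :: "real^'d^'d"
  assumes lam_pos: "lam > 0"
    and sym: "transpose S = S"
    and posdef: "\<And>x. x \<noteq> 0 \<Longrightarrow> x \<bullet> (S *v x) > 0"
  shows "filterlim (R_soft_inf lam S) at_top at_infinity \<and>
    (\<forall>(G :: real^'d \<Rightarrow> real^'d) (mu0 :: real^'d) (mu :: real \<Rightarrow> real^'d).
       (\<forall>x. (R_soft_inf lam S has_derivative (\<lambda>h. G x \<bullet> h)) (at x)) \<and>
       mu 0 = mu0 \<and>
       (\<forall>t\<ge>0. (mu has_vector_derivative (- G (mu t))) (at t within {0..}))
       \<longrightarrow> (\<exists>\<rho>\<ge>norm mu0.
             mu ` {0..} \<subseteq> {x. R_soft_inf lam S x \<le> R_soft_inf lam S mu0} \<and>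
             {x. R_soft_inf lam S x \<le> R_soft_inf lam S mu0} \<subseteq> cball 0 \<rho>))"
proof (intro conjI allI impI)
  show coercive: "filterlim (R_soft_inf lam S) at_top at_infinity"
    using lam_pos sym posdef by (rule R_soft_inf_coercive)
  fix G mu0 and mu :: "real \<Rightarrow> real^'d"
  assume "(\<forall>x. (R_soft_inf lam S has_derivative (\<lambda>h. G x \<bullet> h)) (at x)) \<and> mu 0 = mu0 \<and>
    (\<forall>t\<ge>0. (mu has_vector_derivative (- G (mu t))) (at t within {0..}))"
  then have grad: "\<And>x. (R_soft_inf lam S has_derivative (\<lambda>h. G x \<bullet> h)) (at x)"
    and init: "mu 0 = mu0"
    and flow: "\<And>t. t \<ge> 0 \<Longrightarrow> (mu has_vector_derivative (- G (mu t))) (at t within {0..})"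
    by auto
  let ?L = "{x. R_soft_inf lam S x \<le> R_soft_inf lam S mu0}"
  obtain b where b: "\<forall>x\<in>?L. norm x \<le> b"
    using bounded_sublevel_if_coercive[OF coercive] by (auto simp: bounded_iff)
  show "\<exists>\<rho>\<ge>norm mu0. mu ` {0..} \<subseteq> ?L \<and> ?L \<subseteq> cball 0 \<rho>"
  proof (intro exI conjI)
    show "mu ` {0..} \<subseteq> ?L"
      using gradient_flow_nonincreasing[OF grad flow] init by auto
    show "?L \<subseteq> cball 0 (max b (norm mu0))"
      using b by auto
  qed simp
qed

end
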